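(* Every sub-space-time $(M,D,g,T)$ that is compact in the Alexandrov topology (in particular every compact space-time) fails to be chronological, i.e. there exists $p\in M$ with $p\ll p$.
   Context: A sub-space-time is a quadruple $(M,D,g,T)$ where $M$ is a connected smooth manifold, $D$ is a smooth bracket-generating distribution on $M$ of rank $k$ with $2\le k<\dim M$, $g$ is a smoothly varying non-degenerate symmetric bilinear form on the fibres $D_p$ of index $1$, and $T$ is a globally defined smooth horizontal vector field with $g(T,T)<0$. A horizontal curve is an absolutely continuous curve with $\dot\gamma\in D$ a.e. and $\dot\gamma$ locally square integrable w.r.t. an auxiliary Riemannian metric; it is timelike future directed (t.f.d.) if a.e. $g(\dot\gamma,\dot\gamma)<0$ and $g(T,\dot\gamma)<0$. $p\ll q$ means there is a horizontal t.f.d. curve from $p$ to $q$; $I^+(p)=\{q:p\ll q\}$, $I^-(p)=\{q:q\ll p\}$. The Alexandrov topology is the topology on $M$ generated by the subbasis $\{I^+(p),I^-(p):p\in M\}$. A space-time is a smooth connected manifold with a Lorentzian metric and a timelike vector field (the case $D=TM$). The sub-space-time is chronological if there is no $p$ with $p\ll p$. *)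

theory Defs
  imports "HOL-Analysis.Analysis"
begin

fun dd :: "'a::real_normed_vector list \<Rightarrow> ('a \<Rightarrow> 'b::real_normed_vector) \<Rightarrow> 'a \<Rightarrow> 'b" where
  "dd [] f = f"
| "dd (v # vs) f = (\<lambda>x. frechet_derivative (dd vs f) (at x) v)"

definition smooth_on :: "'a::real_normed_vector set \<Rightarrow> ('a \<Rightarrow> 'b::real_normed_vector) \<Rightarrow> bool" where
  "smooth_on U f \<longleftrightarrow> (\<forall>vs. \<forall>x\<in>U. dd vs f differentiable (at x))"

definition smooth_on_set :: "'a::real_normed_vector set \<Rightarrow> ('a \<Rightarrow> 'b::real_normed_vector) \<Rightarrow> bool" where
  "smooth_on_set M f \<longleftrightarrow>
     (\<forall>p\<in>M. \<exists>U h. open U \<and> p \<in> U \<and> smooth_on U h \<and> (\<forall>q\<in>M \<inter> U. h q = f q))"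

definition submanifold :: "'a::euclidean_space set \<Rightarrow> nat \<Rightarrow> bool" where
  "submanifold M m \<longleftrightarrow>
     (\<forall>p\<in>M. \<exists>U V (\<phi>::'a \<Rightarrow> 'a) \<psi> B.
        open U \<and> open V \<and> p \<in> U \<and> smooth_on U \<phi> \<and> smooth_on V \<psi> \<and>
        \<phi> ` U = V \<and> (\<forall>x\<in>U. \<psi> (\<phi> x) = x) \<and>
        B \<subseteq> Basis \<and> card B = m \<and>
        \<phi> ` (M \<inter> U) = V \<inter> {y. \<forall>i\<in>Basis - B. y \<bullet> i = 0})"

definition tangent_space :: "'a::euclidean_space set \<Rightarrow> 'a \<Rightarrow> 'a set" where
  "tangent_space M p = {v. \<exists>(\<gamma>::real \<Rightarrow> 'a) e. e > 0 \<and> \<gamma> 0 = p \<and>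
      (\<forall>t\<in>{-e<..<e}. \<gamma> t \<in> M) \<and> (\<gamma> has_vector_derivative v) (at 0)}"

definition smooth_distribution :: "'a::euclidean_space set \<Rightarrow> ('a \<Rightarrow> 'a set) \<Rightarrow> nat \<Rightarrow> bool" where
  "smooth_distribution M D k \<longleftrightarrow>
     (\<forall>p\<in>M. subspace (D p) \<and> dim (D p) = k \<and> D p \<subseteq> tangent_space M p) \<and>
     (\<forall>p\<in>M. \<exists>U (X::nat \<Rightarrow> 'a \<Rightarrow> 'a). open U \<and> p \<in> U \<and> (\<forall>i<k. smooth_on U (X i)) \<and>
        (\<forall>q\<in>M \<inter> U. D q = span {X i q | i. i < k}))"

definition lie_bracket :: "('a::euclidean_space \<Rightarrow> 'a) \<Rightarrow> ('a \<Rightarrow> 'a) \<Rightarrow> 'a \<Rightarrow> 'a" where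
  "lie_bracket X Y = (\<lambda>x. frechet_derivative Y (at x) (X x) - frechet_derivative X (at x) (Y x))"

inductive_set lie_gen :: "'a::euclidean_space set \<Rightarrow> ('a \<Rightarrow> 'a set) \<Rightarrow> 'a set \<Rightarrow> ('a \<Rightarrow> 'a) set"
  for M D U where
  base: "smooth_on U X \<Longrightarrow> (\<forall>q\<in>M \<inter> U. X q \<in> D q) \<Longrightarrow> X \<in> lie_gen M D U"
| bracket: "X \<in> lie_gen M D U \<Longrightarrow> Y \<in> lie_gen M D U \<Longrightarrow> lie_bracket X Y \<in> lie_gen M D U"

definition bracket_generating :: "'a::euclidean_space set \<Rightarrow> ('a \<Rightarrow> 'a set) \<Rightarrow> bool" where
  "bracket_generating M D \<longleftrightarrow>
     (\<forall>p\<in>M. \<exists>U. open U \<and> p \<in> U \<and> span ((\<lambda>X. X p) ` lie_gen M D U) = tangent_space M p)"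

definition neg_definite_on :: "('a \<Rightarrow> 'a \<Rightarrow> real) \<Rightarrow> 'a::real_vector set \<Rightarrow> bool" where
  "neg_definite_on b W \<longleftrightarrow> (\<forall>w\<in>W. w \<noteq> 0 \<longrightarrow> b w w < 0)"

definition sub_lorentzian :: "'a::euclidean_space set \<Rightarrow> ('a \<Rightarrow> 'a set) \<Rightarrow> ('a \<Rightarrow> 'a \<Rightarrow> 'a \<Rightarrow> real) \<Rightarrow> bool" where
  "sub_lorentzian M D g \<longleftrightarrow>
     (\<forall>p\<in>M.
        (\<forall>u\<in>D p. \<forall>v\<in>D p. g p u v = g p v u) \<and>
        (\<forall>u\<in>D p. \<forall>v\<in>D p. \<forall>w\<in>D p. \<forall>c. g p (u + v) w = g p u w + g p v w \<and> g p (c *\<^sub>R u) w = c * g p u w) \<and>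
        (\<forall>u\<in>D p. (\<forall>v\<in>D p. g p u v = 0) \<longrightarrow> u = 0) \<and>
        (\<exists>W. subspace W \<and> W \<subseteq> D p \<and> dim W = 1 \<and> neg_definite_on (g p) W) \<and>
        (\<forall>W. subspace W \<and> W \<subseteq> D p \<and> neg_definite_on (g p) W \<longrightarrow> dim W \<le> 1)) \<and>
     (\<forall>U X Y. open U \<and> smooth_on U X \<and> smooth_on U Y \<and> (\<forall>q\<in>M \<inter> U. X q \<in> D q \<and> Y q \<in> D q)
        \<longrightarrow> smooth_on_set (M \<inter> U) (\<lambda>q. g q (X q) (Y q)))"

definition time_orientation :: "'a::euclidean_space set \<Rightarrow> ('a \<Rightarrow> 'a set) \<Rightarrow> ('a \<Rightarrow> 'a \<Rightarrow> 'a \<Rightarrow> real) \<Rightarrow> ('a \<Rightarrow> 'a) \<Rightarrow> bool" where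
  "time_orientation M D g T \<longleftrightarrow> smooth_on_set M T \<and> (\<forall>p\<in>M. T p \<in> D p \<and> g p (T p) (T p) < 0)"

definition sub_space_time ::
  "'a::euclidean_space set \<Rightarrow> nat \<Rightarrow> ('a \<Rightarrow> 'a set) \<Rightarrow> nat \<Rightarrow> ('a \<Rightarrow> 'a \<Rightarrow> 'a \<Rightarrow> real) \<Rightarrow> ('a \<Rightarrow> 'a) \<Rightarrow> bool" where
  "sub_space_time M m D k g T \<longleftrightarrow>
     M \<noteq> {} \<and> connected M \<and> submanifold M m \<and> 2 \<le> k \<and> k < m \<and>
     smooth_distribution M D k \<and> bracket_generating M D \<and> sub_lorentzian M D g \<and>
     time_orientation M D g T"

definition absolutely_continuous_on :: "real set \<Rightarrow> (real \<Rightarrow> 'a::real_normed_vector) \<Rightarrow> bool" where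
  "absolutely_continuous_on S f \<longleftrightarrow>
     (\<forall>\<epsilon>>0. \<exists>\<delta>>0. \<forall>n (as::nat \<Rightarrow> real) bs.
        (\<forall>i<n. as i \<in> S \<and> bs i \<in> S \<and> as i \<le> bs i \<and> {as i..bs i} \<subseteq> S) \<and>
        (\<forall>i<n. \<forall>j<n. i \<noteq> j \<longrightarrow> {as i<..<bs i} \<inter> {as j<..<bs j} = {}) \<and>
        (\<Sum>i<n. bs i - as i) < \<delta>
        \<longrightarrow> (\<Sum>i<n. norm (f (bs i) - f (as i))) < \<epsilon>)"

text \<open>Horizontal curve on [a,b]: absolutely continuous, in M, velocity in D a.e.,
  velocity square integrable (w.r.t. the Euclidean auxiliary metric).\<close>
definition horizontal_curve :: "'a::euclidean_space set \<Rightarrow> ('a \<Rightarrow> 'a set) \<Rightarrow> (real \<Rightarrow> 'a) \<Rightarrow> real \<Rightarrow> real \<Rightarrow> bool" where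
  "horizontal_curve M D \<gamma> a b \<longleftrightarrow>
     a < b \<and> \<gamma> ` {a..b} \<subseteq> M \<and> absolutely_continuous_on {a..b} \<gamma> \<and>
     (AE t in lebesgue. t \<in> {a..b} \<longrightarrow> \<gamma> differentiable (at t) \<and> vector_derivative \<gamma> (at t) \<in> D (\<gamma> t)) \<and>
     (\<lambda>t. (norm (vector_derivative \<gamma> (at t)))\<^sup>2) integrable_on {a..b}"

definition timelike_fd :: "('a::euclidean_space \<Rightarrow> 'a \<Rightarrow> 'a \<Rightarrow> real) \<Rightarrow> ('a \<Rightarrow> 'a) \<Rightarrow> (real \<Rightarrow> 'a) \<Rightarrow> real \<Rightarrow> real \<Rightarrow> bool" where
  "timelike_fd g T \<gamma> a b \<longleftrightarrow>
     (AE t in lebesgue. t \<in> {a..b} \<longrightarrow>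
        g (\<gamma> t) (vector_derivative \<gamma> (at t)) (vector_derivative \<gamma> (at t)) < 0 \<and>
        g (\<gamma> t) (T (\<gamma> t)) (vector_derivative \<gamma> (at t)) < 0)"

definition chron :: "'a::euclidean_space set \<Rightarrow> ('a \<Rightarrow> 'a set) \<Rightarrow> ('a \<Rightarrow> 'a \<Rightarrow> 'a \<Rightarrow> real) \<Rightarrow> ('a \<Rightarrow> 'a) \<Rightarrow> 'a \<Rightarrow> 'a \<Rightarrow> bool" where
  "chron M D g T p q \<longleftrightarrow>
     (\<exists>\<gamma> a b. horizontal_curve M D \<gamma> a b \<and> timelike_fd g T \<gamma> a b \<and> \<gamma> a = p \<and> \<gamma> b = q)"

definition I_plus where "I_plus M D g T p = {q. chron M D g T p q}"
definition I_minus where "I_minus M D g T p = {q. chron M D g T q p}"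

text \<open>Alexandrov topology on M: generated by the subbasis of all I+(p), I-(p);
  M itself is included so that the underlying space is M (empty intersection).\<close>
definition alexandrov_topology where
  "alexandrov_topology M D g T =
     topology_generated_by (insert M ((\<lambda>p. I_plus M D g T p) ` M \<union> (\<lambda>p. I_minus M D g T p) ` M))"

end

theory Submission
  imports Defs
begin

text \<open>
  Every point q has a chronological future. In a slice chart (phi, psi) around q the smooth
  extension h of the time orientation T becomes the field sending y to D phi (psi y) (h (psi y)),
  which is Lipschitz and tangent to the slice; its Picard-Lindeloef flow, mapped back by psi, is a
  short Lipschitz integral curve of T starting at q, hence a horizontal timelike future-directed
  curve. Consequently the chronological pasts I-(p) cover M. They are open in the Alexandrov
  topology, so finitely many of them, I-(p1), ..., I-(pn), already cover M. Then every pi lies in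
  the chronological past of some pj, and in the finite set of the pi transitivity of the
  chronological relation forces some pi to precede itself.
\<close>

section \<open>Absolute continuity\<close>

definition short_subintervals :: "real set \<Rightarrow> nat \<Rightarrow> (nat \<Rightarrow> real) \<Rightarrow> (nat \<Rightarrow> real) \<Rightarrow> real \<Rightarrow> bool" where
  "short_subintervals S n as bs \<delta> \<longleftrightarrow>
     (\<forall>i<n. as i \<in> S \<and> bs i \<in> S \<and> as i \<le> bs i \<and> {as i..bs i} \<subseteq> S) \<and>
     (\<forall>i<n. \<forall>j<n. i \<noteq> j \<longrightarrow> {as i<..<bs i} \<inter> {as j<..<bs j} = {}) \<and>
     (\<Sum>i<n. bs i - as i) < \<delta>"

lemma absolutely_continuous_on_iff:
  "absolutely_continuous_on S f \<longleftrightarrow>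
     (\<forall>\<epsilon>>0. \<exists>\<delta>>0. \<forall>n as bs. short_subintervals S n as bs \<delta> \<longrightarrow>
        (\<Sum>i<n. norm (f (bs i) - f (as i))) < \<epsilon>)"
  unfolding absolutely_continuous_on_def short_subintervals_def by simp

lemma short_subintervals_mono:
  "short_subintervals S n as bs \<delta> \<Longrightarrow> \<delta> \<le> \<delta>' \<Longrightarrow> short_subintervals S n as bs \<delta>'"
  unfolding short_subintervals_def using order_less_le_trans by blast

lemma short_subintervals_clamp:
  assumes short: "short_subintervals S n as bs \<delta>" and "a \<le> b"
  shows "short_subintervals {a..b} n (\<lambda>i. max a (min (as i) b)) (\<lambda>i. max a (min (bs i) b)) \<delta>"
  unfolding short_subintervals_def
proof (intro conjI allI impI)
  have le: "as i \<le> bs i" if "i < n" for i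
    using short that unfolding short_subintervals_def by auto
  show "max a (min (as i) b) \<in> {a..b}" "max a (min (bs i) b) \<in> {a..b}"
    "max a (min (as i) b) \<le> max a (min (bs i) b)"
    "{max a (min (as i) b)..max a (min (bs i) b)} \<subseteq> {a..b}" if "i < n" for i
    using \<open>a \<le> b\<close> le[OF that] by auto
  show "{max a (min (as i) b)<..<max a (min (bs i) b)} \<inter> {max a (min (as j) b)<..<max a (min (bs j) b)} = {}"
    if "i < n" "j < n" "i \<noteq> j" for i j
  proof -
    have "{max a (min (as k) b)<..<max a (min (bs k) b)} \<subseteq> {as k<..<bs k}" for k
      by auto
    then show ?thesis using short that unfolding short_subintervals_def by blast
  qed
  have "(\<Sum>i<n. max a (min (bs i) b) - max a (min (as i) b)) \<le> (\<Sum>i<n. bs i - as i)"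
  proof (rule sum_mono)
    fix i assume "i \<in> {..<n}"
    then show "max a (min (bs i) b) - max a (min (as i) b) \<le> bs i - as i"
      using le[of i] by (simp add: min_def max_def)
  qed
  then show "(\<Sum>i<n. max a (min (bs i) b) - max a (min (as i) b)) < \<delta>"
    using short unfolding short_subintervals_def by linarith
qed

lemma short_subintervals_translate:
  assumes "short_subintervals {a - c..b - c} n as bs \<delta>"
  shows "short_subintervals {a..b} n (\<lambda>i. as i + c) (\<lambda>i. bs i + c) \<delta>"
proof -
  have shift: "{x + c<..<y + c} \<inter> {u + c<..<v + c} = {}" if "{x<..<y} \<inter> {u<..<v} = {}" for x y u v :: real
    using that by (auto simp: disjoint_iff)
  show ?thesis
    using assms shift unfolding short_subintervals_def by force
qed

lemma absolutely_continuous_on_cong: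
  assumes eq: "\<And>t. t \<in> S \<Longrightarrow> f t = g t" and ac: "absolutely_continuous_on S f"
  shows "absolutely_continuous_on S g"
  unfolding absolutely_continuous_on_iff
proof (intro allI impI)
  fix \<epsilon> :: real assume "\<epsilon> > 0"
  then obtain \<delta> where "\<delta> > 0"
    and H: "\<And>n as bs. short_subintervals S n as bs \<delta> \<Longrightarrow> (\<Sum>i<n. norm (f (bs i) - f (as i))) < \<epsilon>"
    using ac unfolding absolutely_continuous_on_iff by blast
  have "(\<Sum>i<n. norm (g (bs i) - g (as i))) < \<epsilon>" if short: "short_subintervals S n as bs \<delta>" for n as bs
  proof -
    have "(\<Sum>i<n. norm (g (bs i) - g (as i))) = (\<Sum>i<n. norm (f (bs i) - f (as i)))"
      using short eq unfolding short_subintervals_def by (intro sum.cong) auto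
    then show ?thesis using H[OF short] by simp
  qed
  then show "\<exists>\<delta>>0. \<forall>n as bs. short_subintervals S n as bs \<delta> \<longrightarrow> (\<Sum>i<n. norm (g (bs i) - g (as i))) < \<epsilon>"
    using \<open>\<delta> > 0\<close> by blast
qed

lemma lipschitz_on_imp_absolutely_continuous_on:
  assumes lip: "C-lipschitz_on S f"
  shows "absolutely_continuous_on S f"
  unfolding absolutely_continuous_on_iff
proof (intro allI impI)
  fix \<epsilon> :: real assume "\<epsilon> > 0"
  have C: "C \<ge> 0" using lip lipschitz_on_nonneg by blast
  show "\<exists>\<delta>>0. \<forall>n as bs. short_subintervals S n as bs \<delta> \<longrightarrow> (\<Sum>i<n. norm (f (bs i) - f (as i))) < \<epsilon>"
  proof (intro exI[of _ "\<epsilon> / (C + 1)"] conjI allI impI)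
    show "\<epsilon> / (C + 1) > 0" using \<open>\<epsilon> > 0\<close> C by auto
    fix n and as bs :: "nat \<Rightarrow> real"
    assume short: "short_subintervals S n as bs (\<epsilon> / (C + 1))"
    have "(\<Sum>i<n. norm (f (bs i) - f (as i))) \<le> (\<Sum>i<n. C * (bs i - as i))"
    proof (intro sum_mono)
      fix i assume "i \<in> {..<n}"
      then have "as i \<in> S" "bs i \<in> S" "as i \<le> bs i" using short unfolding short_subintervals_def by auto
      then show "norm (f (bs i) - f (as i)) \<le> C * (bs i - as i)"
        using lipschitz_onD[OF lip, of "bs i" "as i"] by (simp add: dist_norm dist_real_def)
    qed
    also have "\<dots> = C * (\<Sum>i<n. bs i - as i)" by (simp add: sum_distrib_left)
    also have "\<dots> \<le> C * (\<epsilon> / (C + 1))"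
      using short C unfolding short_subintervals_def by (intro mult_left_mono) auto
    also have "\<dots> < \<epsilon>" using \<open>\<epsilon> > 0\<close> C by (simp add: field_simps)
    finally show "(\<Sum>i<n. norm (f (bs i) - f (as i))) < \<epsilon>" .
  qed
qed

lemma absolutely_continuous_on_translate:
  assumes ac: "absolutely_continuous_on {a..b} f"
  shows "absolutely_continuous_on {a - c..b - c} (\<lambda>t. f (t + c))"
  unfolding absolutely_continuous_on_iff
proof (intro allI impI)
  fix \<epsilon> :: real assume "\<epsilon> > 0"
  then obtain \<delta> where "\<delta> > 0"
    and H: "\<And>n as bs. short_subintervals {a..b} n as bs \<delta> \<Longrightarrow> (\<Sum>i<n. norm (f (bs i) - f (as i))) < \<epsilon>"
    using ac unfolding absolutely_continuous_on_iff by blast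
  then show "\<exists>\<delta>>0. \<forall>n as bs. short_subintervals {a - c..b - c} n as bs \<delta> \<longrightarrow>
      (\<Sum>i<n. norm (f (bs i + c) - f (as i + c))) < \<epsilon>"
    using short_subintervals_translate by blast
qed

lemma norm_diff_le_split_at:
  fixes f :: "real \<Rightarrow> 'a::real_normed_vector"
  assumes "a \<le> s" "s \<le> t" "t \<le> c" "a \<le> b" "b \<le> c"
  shows "norm (f t - f s) \<le> norm (f (max a (min t b)) - f (max a (min s b))) +
           norm (f (max b (min t c)) - f (max b (min s c)))"
proof -
  consider "t \<le> b" | "b \<le> s" | "s < b" "b < t" by linarith
  then show ?thesis
  proof cases
    case 3
    then show ?thesis using assms norm_triangle_ineq[of "f b - f s" "f t - f b"] by simp
  qed (use assms in \<open>simp_all add: max_def min_def\<close>)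
qed

lemma absolutely_continuous_on_combine:
  fixes f :: "real \<Rightarrow> 'a::real_normed_vector"
  assumes "a \<le> b" "b \<le> c"
    and left: "absolutely_continuous_on {a..b} f" and right: "absolutely_continuous_on {b..c} f"
  shows "absolutely_continuous_on {a..c} f"
  unfolding absolutely_continuous_on_iff
proof (intro allI impI)
  fix \<epsilon> :: real assume "\<epsilon> > 0"
  then have "\<epsilon>/2 > 0" by simp
  then obtain \<delta>1 where "\<delta>1 > 0"
    and H1: "\<And>n as bs. short_subintervals {a..b} n as bs \<delta>1 \<Longrightarrow> (\<Sum>i<n. norm (f (bs i) - f (as i))) < \<epsilon>/2"
    using left unfolding absolutely_continuous_on_iff by blast
  obtain \<delta>2 where "\<delta>2 > 0"
    and H2: "\<And>n as bs. short_subintervals {b..c} n as bs \<delta>2 \<Longrightarrow> (\<Sum>i<n. norm (f (bs i) - f (as i))) < \<epsilon>/2"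
    using right \<open>\<epsilon>/2 > 0\<close> unfolding absolutely_continuous_on_iff by blast
  show "\<exists>\<delta>>0. \<forall>n as bs. short_subintervals {a..c} n as bs \<delta> \<longrightarrow> (\<Sum>i<n. norm (f (bs i) - f (as i))) < \<epsilon>"
  proof (intro exI[of _ "min \<delta>1 \<delta>2"] conjI allI impI)
    show "min \<delta>1 \<delta>2 > 0" using \<open>\<delta>1 > 0\<close> \<open>\<delta>2 > 0\<close> by auto
    fix n and as bs :: "nat \<Rightarrow> real"
    assume short: "short_subintervals {a..c} n as bs (min \<delta>1 \<delta>2)"
    define l where "l x = max a (min x b)" for x
    define r where "r x = max b (min x c)" for x
    have "short_subintervals {a..b} n (\<lambda>i. l (as i)) (\<lambda>i. l (bs i)) \<delta>1"
      unfolding l_def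
      by (rule short_subintervals_mono[OF short_subintervals_clamp[OF short \<open>a \<le> b\<close>]]) simp
    then have "(\<Sum>i<n. norm (f (l (bs i)) - f (l (as i)))) < \<epsilon>/2" by (rule H1)
    moreover have "short_subintervals {b..c} n (\<lambda>i. r (as i)) (\<lambda>i. r (bs i)) \<delta>2"
      unfolding r_def
      by (rule short_subintervals_mono[OF short_subintervals_clamp[OF short \<open>b \<le> c\<close>]]) simp
    then have "(\<Sum>i<n. norm (f (r (bs i)) - f (r (as i)))) < \<epsilon>/2" by (rule H2)
    moreover have "(\<Sum>i<n. norm (f (bs i) - f (as i))) \<le>
        (\<Sum>i<n. norm (f (l (bs i)) - f (l (as i)))) + (\<Sum>i<n. norm (f (r (bs i)) - f (r (as i))))"
      unfolding sum.distrib[symmetric]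
    proof (rule sum_mono)
      fix i assume "i \<in> {..<n}"
      then have "a \<le> as i" "as i \<le> bs i" "bs i \<le> c" using short unfolding short_subintervals_def by auto
      then show "norm (f (bs i) - f (as i)) \<le> norm (f (l (bs i)) - f (l (as i))) + norm (f (r (bs i)) - f (r (as i)))"
        unfolding l_def r_def using \<open>a \<le> b\<close> \<open>b \<le> c\<close> by (rule norm_diff_le_split_at)
    qed
    ultimately show "(\<Sum>i<n. norm (f (bs i) - f (as i))) < \<epsilon>" by linarith
  qed
qed

section \<open>Horizontal curves and the chronological relation\<close>

lemma vector_derivative_cong_open:
  fixes f g :: "real \<Rightarrow> 'a::real_normed_vector"
  assumes "open S" "t \<in> S" "\<And>x. x \<in> S \<Longrightarrow> f x = g x"
  shows "vector_derivative f (at t) = vector_derivative g (at t)"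
    and "f differentiable (at t) \<longleftrightarrow> g differentiable (at t)"
proof -
  have eq: "(f has_vector_derivative d) (at t) \<longleftrightarrow> (g has_vector_derivative d) (at t)" for d
    using has_vector_derivative_transform_within_open[OF _ assms(1,2), of f d g]
      has_vector_derivative_transform_within_open[OF _ assms(1,2), of g d f] assms(3) by metis
  show "vector_derivative f (at t) = vector_derivative g (at t)"
    unfolding vector_derivative_def using eq by simp
  show "f differentiable (at t) \<longleftrightarrow> g differentiable (at t)"
    using eq vector_derivative_works differentiableI_vector by metis
qed

lemma has_vector_derivative_translate:
  fixes \<gamma> :: "real \<Rightarrow> 'a::real_normed_vector"
  shows "((\<lambda>t. \<gamma> (t + c)) has_vector_derivative d) (at t) \<longleftrightarrow> (\<gamma> has_vector_derivative d) (at (t + c))"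
proof -
  have shift: "((\<lambda>s. s + e) has_vector_derivative 1) (at s)" for e s :: real
    by (simp add: has_vector_derivative_add_const)
  show ?thesis
  proof
    assume "((\<lambda>t. \<gamma> (t + c)) has_vector_derivative d) (at t)"
    then have "(((\<lambda>t. \<gamma> (t + c)) \<circ> (\<lambda>s. s + - c)) has_vector_derivative 1 *\<^sub>R d) (at (t + c))"
      by (intro vector_diff_chain_at[OF shift]) simp
    then show "(\<gamma> has_vector_derivative d) (at (t + c))" by (simp add: o_def)
  next
    assume "(\<gamma> has_vector_derivative d) (at (t + c))"
    then have "((\<gamma> \<circ> (\<lambda>s. s + c)) has_vector_derivative 1 *\<^sub>R d) (at t)"
      by (intro vector_diff_chain_at[OF shift]) simp
    then show "((\<lambda>t. \<gamma> (t + c)) has_vector_derivative d) (at t)" by (simp add: o_def)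
  qed
qed

lemma vector_derivative_translate:
  fixes \<gamma> :: "real \<Rightarrow> 'a::real_normed_vector"
  shows "vector_derivative (\<lambda>t. \<gamma> (t + c)) (at t) = vector_derivative \<gamma> (at (t + c))"
    and "(\<lambda>t. \<gamma> (t + c)) differentiable (at t) \<longleftrightarrow> \<gamma> differentiable (at (t + c))"
  using has_vector_derivative_translate[of \<gamma> c _ t]
  by (simp_all add: vector_derivative_def) (metis vector_derivative_works differentiableI_vector)

lemma AE_lebesgue_translate:
  assumes "AE t in lebesgue. P t"
  shows "AE t in lebesgue. P (t + c)"
proof -
  obtain N where N: "N \<in> null_sets lebesgue" "{x \<in> space lebesgue. \<not> P x} \<subseteq> N"
    using assms unfolding eventually_ae_filter by blast
  then have "negligible ((+) (-c) ` N)"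
    using negligible_translation negligible_iff_null_sets by blast
  moreover have "{x \<in> space lebesgue. \<not> P (x + c)} \<subseteq> (+) (-c) ` N"
    using N(2) by (force intro: rev_image_eqI[of "_ + c"])
  ultimately show ?thesis unfolding eventually_ae_filter negligible_iff_null_sets by blast
qed

lemma AE_lebesgue_neq: "AE t in lebesgue. t \<noteq> (b::real)"
proof -
  have "{b} \<in> null_sets lebesgue" using negligible_iff_null_sets negligible_sing by blast
  then show ?thesis unfolding eventually_ae_filter by (intro bexI[of _ "{b}"]) auto
qed

lemma horizontal_curve_translate:
  assumes "horizontal_curve M D \<gamma> a b"
  shows "horizontal_curve M D (\<lambda>t. \<gamma> (t + c)) (a - c) (b - c)"
proof -
  have "a < b" and "\<gamma> ` {a..b} \<subseteq> M" and "absolutely_continuous_on {a..b} \<gamma>"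
    and ae: "AE t in lebesgue. t \<in> {a..b} \<longrightarrow> \<gamma> differentiable (at t) \<and> vector_derivative \<gamma> (at t) \<in> D (\<gamma> t)"
    and int: "(\<lambda>t. (norm (vector_derivative \<gamma> (at t)))\<^sup>2) integrable_on {a..b}"
    using assms unfolding horizontal_curve_def by auto
  moreover have "(\<lambda>t. \<gamma> (t + c)) ` {a - c..b - c} \<subseteq> M"
    using \<open>\<gamma> ` {a..b} \<subseteq> M\<close> by force
  moreover have "AE t in lebesgue. t \<in> {a - c..b - c} \<longrightarrow> (\<lambda>t. \<gamma> (t + c)) differentiable (at t) \<and>
       vector_derivative (\<lambda>t. \<gamma> (t + c)) (at t) \<in> D (\<gamma> (t + c))"
    using AE_lebesgue_translate[OF ae, of c] by eventually_elim (auto simp: vector_derivative_translate)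
  moreover have "(\<lambda>t. (norm (vector_derivative (\<lambda>t. \<gamma> (t + c)) (at t)))\<^sup>2) integrable_on {a - c..b - c}"
  proof -
    have "(\<lambda>x. (norm (vector_derivative \<gamma> (at (1 *\<^sub>R x + c))))\<^sup>2) integrable_on
        ((\<lambda>x. (1 / 1) *\<^sub>R x - ((1 / 1) *\<^sub>R c)) ` cbox a b)"
      by (rule integrable_on_affinity) (use int in auto)
    then show ?thesis by (simp add: vector_derivative_translate)
  qed
  ultimately show ?thesis
    unfolding horizontal_curve_def by (auto intro: absolutely_continuous_on_translate)
qed

lemma timelike_fd_translate:
  assumes "timelike_fd g T \<gamma> a b"
  shows "timelike_fd g T (\<lambda>t. \<gamma> (t + c)) (a - c) (b - c)"
  using AE_lebesgue_translate[OF assms[unfolded timelike_fd_def], of c] unfolding timelike_fd_def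
  by eventually_elim (auto simp: vector_derivative_translate)

lemma vector_derivative_join:
  fixes \<gamma>1 \<gamma>2 :: "real \<Rightarrow> 'a::real_normed_vector"
  assumes \<gamma>_def: "\<gamma> = (\<lambda>t. if t \<le> b then \<gamma>1 t else \<gamma>2 t)"
  shows "t < b \<Longrightarrow> vector_derivative \<gamma> (at t) = vector_derivative \<gamma>1 (at t) \<and>
            (\<gamma> differentiable (at t) \<longleftrightarrow> \<gamma>1 differentiable (at t)) \<and> \<gamma> t = \<gamma>1 t"
    and "t > b \<Longrightarrow> vector_derivative \<gamma> (at t) = vector_derivative \<gamma>2 (at t) \<and>
            (\<gamma> differentiable (at t) \<longleftrightarrow> \<gamma>2 differentiable (at t)) \<and> \<gamma> t = \<gamma>2 t"
  using vector_derivative_cong_open[of "{..<b}" t \<gamma> \<gamma>1] vector_derivative_cong_open[of "{b<..}" t \<gamma> \<gamma>2]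
  unfolding \<gamma>_def by auto

lemma horizontal_curve_join:
  assumes h1: "horizontal_curve M D \<gamma>1 a b" and h2: "horizontal_curve M D \<gamma>2 b c"
    and eq: "\<gamma>1 b = \<gamma>2 b"
  shows "horizontal_curve M D (\<lambda>t. if t \<le> b then \<gamma>1 t else \<gamma>2 t) a c"
proof -
  define \<gamma> where "\<gamma> = (\<lambda>t. if t \<le> b then \<gamma>1 t else \<gamma>2 t)"
  note join = vector_derivative_join[OF \<gamma>_def]
  have "a < b" and img1: "\<gamma>1 ` {a..b} \<subseteq> M" and ac1: "absolutely_continuous_on {a..b} \<gamma>1"
    and ae1: "AE t in lebesgue. t \<in> {a..b} \<longrightarrow> \<gamma>1 differentiable (at t) \<and> vector_derivative \<gamma>1 (at t) \<in> D (\<gamma>1 t)"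
    and int1: "(\<lambda>t. (norm (vector_derivative \<gamma>1 (at t)))\<^sup>2) integrable_on {a..b}"
    using h1 unfolding horizontal_curve_def by auto
  have "b < c" and img2: "\<gamma>2 ` {b..c} \<subseteq> M" and ac2: "absolutely_continuous_on {b..c} \<gamma>2"
    and ae2: "AE t in lebesgue. t \<in> {b..c} \<longrightarrow> \<gamma>2 differentiable (at t) \<and> vector_derivative \<gamma>2 (at t) \<in> D (\<gamma>2 t)"
    and int2: "(\<lambda>t. (norm (vector_derivative \<gamma>2 (at t)))\<^sup>2) integrable_on {b..c}"
    using h2 unfolding horizontal_curve_def by auto
  have "\<gamma> ` {a..c} \<subseteq> M"
    using img1 img2 unfolding \<gamma>_def by (auto simp: image_subset_iff)
  moreover have "absolutely_continuous_on {a..c} \<gamma>"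
  proof (rule absolutely_continuous_on_combine)
    show "absolutely_continuous_on {a..b} \<gamma>"
      by (rule absolutely_continuous_on_cong[OF _ ac1]) (auto simp: \<gamma>_def)
    show "absolutely_continuous_on {b..c} \<gamma>"
      by (rule absolutely_continuous_on_cong[OF _ ac2]) (auto simp: \<gamma>_def eq)
  qed (use \<open>a < b\<close> \<open>b < c\<close> in auto)
  moreover have "AE t in lebesgue. t \<in> {a..c} \<longrightarrow> \<gamma> differentiable (at t) \<and> vector_derivative \<gamma> (at t) \<in> D (\<gamma> t)"
    using ae1 ae2 AE_lebesgue_neq[of b]
  proof eventually_elim
    case (elim t)
    then show ?case using join[of t] by (cases "t < b") auto
  qed
  moreover have "(\<lambda>t. (norm (vector_derivative \<gamma> (at t)))\<^sup>2) integrable_on {a..c}"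
  proof (rule Henstock_Kurzweil_Integration.integrable_combine)
    show "(\<lambda>t. (norm (vector_derivative \<gamma> (at t)))\<^sup>2) integrable_on {a..b}"
      by (rule integrable_spike_finite[of "{b}", OF _ _ int1]) (use join(1) in auto)
    show "(\<lambda>t. (norm (vector_derivative \<gamma> (at t)))\<^sup>2) integrable_on {b..c}"
      by (rule integrable_spike_finite[of "{b}", OF _ _ int2]) (use join(2) in auto)
  qed (use \<open>a < b\<close> \<open>b < c\<close> in auto)
  ultimately show ?thesis
    unfolding horizontal_curve_def \<gamma>_def[symmetric] using \<open>a < b\<close> \<open>b < c\<close> by auto
qed

lemma timelike_fd_join:
  assumes "timelike_fd g T \<gamma>1 a b" and "timelike_fd g T \<gamma>2 b c"
  shows "timelike_fd g T (\<lambda>t. if t \<le> b then \<gamma>1 t else \<gamma>2 t) a c"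
proof -
  define \<gamma> where "\<gamma> = (\<lambda>t. if t \<le> b then \<gamma>1 t else \<gamma>2 t)"
  note join = vector_derivative_join[OF \<gamma>_def]
  have "AE t in lebesgue. t \<in> {a..c} \<longrightarrow>
        g (\<gamma> t) (vector_derivative \<gamma> (at t)) (vector_derivative \<gamma> (at t)) < 0 \<and>
        g (\<gamma> t) (T (\<gamma> t)) (vector_derivative \<gamma> (at t)) < 0"
    using assms[unfolded timelike_fd_def] AE_lebesgue_neq[of b]
  proof eventually_elim
    case (elim t)
    then show ?case using join[of t] by (cases "t < b") auto
  qed
  then show ?thesis unfolding timelike_fd_def \<gamma>_def .
qed

lemma chron_trans:
  assumes "chron M D g T p q" "chron M D g T q r"
  shows "chron M D g T p r"
proof -
  obtain \<gamma>1 a1 b1 where g1: "horizontal_curve M D \<gamma>1 a1 b1" "timelike_fd g T \<gamma>1 a1 b1" "\<gamma>1 a1 = p" "\<gamma>1 b1 = q"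
    using assms(1) unfolding chron_def by blast
  obtain \<gamma>2 a2 b2 where g2: "horizontal_curve M D \<gamma>2 a2 b2" "timelike_fd g T \<gamma>2 a2 b2" "\<gamma>2 a2 = q" "\<gamma>2 b2 = r"
    using assms(2) unfolding chron_def by blast
  define c where "c = a2 - b1"
  define \<delta> where "\<delta> = (\<lambda>t. \<gamma>2 (t + c))"
  have "a2 - c = b1" unfolding c_def by simp
  then have h\<delta>: "horizontal_curve M D \<delta> b1 (b2 - c)" and t\<delta>: "timelike_fd g T \<delta> b1 (b2 - c)"
    using horizontal_curve_translate[OF g2(1), of c] timelike_fd_translate[OF g2(2), of c]
    unfolding \<delta>_def by simp_all
  have "\<delta> b1 = q" "\<delta> (b2 - c) = r" unfolding \<delta>_def c_def using g2(3,4) by simp_all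
  have "a1 < b1" using g1(1) unfolding horizontal_curve_def by simp
  have "horizontal_curve M D (\<lambda>t. if t \<le> b1 then \<gamma>1 t else \<delta> t) a1 (b2 - c)"
    by (rule horizontal_curve_join[OF g1(1) h\<delta>]) (simp add: g1(4) \<open>\<delta> b1 = q\<close>)
  moreover have "timelike_fd g T (\<lambda>t. if t \<le> b1 then \<gamma>1 t else \<delta> t) a1 (b2 - c)"
    by (rule timelike_fd_join[OF g1(2) t\<delta>])
  moreover have "b1 < b2 - c" using h\<delta> unfolding horizontal_curve_def by simp
  then have "(\<lambda>t. if t \<le> b1 then \<gamma>1 t else \<delta> t) a1 = p" "(\<lambda>t. if t \<le> b1 then \<gamma>1 t else \<delta> t) (b2 - c) = r"
    using \<open>a1 < b1\<close> g1(3) \<open>\<delta> (b2 - c) = r\<close> by auto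
  ultimately show ?thesis unfolding chron_def by blast
qed

lemma chron_imp_mem: "chron M D g T p q \<Longrightarrow> p \<in> M \<and> q \<in> M"
  unfolding chron_def horizontal_curve_def by force

section \<open>Smooth maps and Lipschitz estimates\<close>

lemma dd_append: "dd ws (dd vs f) = dd (ws @ vs) f"
  by (induction ws) auto

lemma smooth_on_subset: "smooth_on U f \<Longrightarrow> V \<subseteq> U \<Longrightarrow> smooth_on V f"
  unfolding smooth_on_def by blast

lemma smooth_on_dd: "smooth_on U f \<Longrightarrow> smooth_on U (dd vs f)"
  unfolding smooth_on_def by (simp add: dd_append)

lemma smooth_on_imp_differentiable: "smooth_on U f \<Longrightarrow> x \<in> U \<Longrightarrow> f differentiable (at x)"
  unfolding smooth_on_def by (metis dd.simps(1))

lemma smooth_on_has_derivative: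
  "smooth_on U f \<Longrightarrow> x \<in> U \<Longrightarrow> (f has_derivative frechet_derivative f (at x)) (at x)"
  using smooth_on_imp_differentiable frechet_derivative_works by blast

lemma smooth_on_imp_continuous_on: "smooth_on U f \<Longrightarrow> open U \<Longrightarrow> continuous_on U f"
  by (meson continuous_at_imp_continuous_on differentiable_imp_continuous_within smooth_on_imp_differentiable)

lemma smooth_on_set_imp_continuous_on:
  assumes "smooth_on_set M f"
  shows "continuous_on M f"
  unfolding continuous_on_eq_continuous_within
proof
  fix p assume "p \<in> M"
  obtain U h where U: "open U" "p \<in> U" "smooth_on U h" and eq: "\<forall>q\<in>M \<inter> U. h q = f q"
    using assms \<open>p \<in> M\<close> unfolding smooth_on_set_def by blast
  have "continuous (at p within M \<inter> U) h"
    by (rule differentiable_imp_continuous_within[OF differentiable_at_withinI])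
      (rule smooth_on_imp_differentiable[OF U(3,2)])
  then have "continuous (at p within M \<inter> U) f"
    by (rule continuous_transform_within[OF _ zero_less_one]) (use eq \<open>p \<in> M\<close> U(2) in simp_all)
  moreover have "at p within M \<inter> U = at p within M"
    by (rule at_within_nhd[OF U(2,1)]) auto
  ultimately show "continuous (at p within M) f" by simp
qed

lemma linear_eq_sum_Basis:
  fixes L :: "'a::euclidean_space \<Rightarrow> 'b::real_vector"
  assumes "linear L"
  shows "L v = (\<Sum>i\<in>Basis. (v \<bullet> i) *\<^sub>R L i)"
proof -
  have "L v = L (\<Sum>i\<in>Basis. (v \<bullet> i) *\<^sub>R i)" by (simp add: euclidean_representation)
  also have "\<dots> = (\<Sum>i\<in>Basis. (v \<bullet> i) *\<^sub>R L i)"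
    using assms by (simp add: linear_sum linear_scale o_def)
  finally show ?thesis .
qed

lemma continuous_on_compact_norm_bound:
  fixes f :: "'a::metric_space \<Rightarrow> 'b::real_normed_vector"
  assumes "compact K" "continuous_on K f"
  obtains B where "B > 0" "\<And>x. x \<in> K \<Longrightarrow> norm (f x) \<le> B"
proof -
  obtain B where "B > 0" "\<forall>y\<in>f ` K. norm y \<le> B"
    using bounded_pos compact_imp_bounded[OF compact_continuous_image[OF assms(2,1)]] by blast
  then show ?thesis using that by simp
qed

lemma continuous_at_cball_image:
  fixes \<psi> :: "'a::metric_space \<Rightarrow> 'b::metric_space"
  assumes "continuous (at y0) \<psi>" "open V" "y0 \<in> V" "\<rho> > 0"
  obtains r where "r > 0" "cball y0 r \<subseteq> V" "\<psi> ` cball y0 r \<subseteq> cball (\<psi> y0) \<rho>"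
proof -
  obtain d where "d > 0" and d: "\<And>y. dist y y0 < d \<Longrightarrow> dist (\<psi> y) (\<psi> y0) < \<rho>"
    using assms(1,4) unfolding continuous_at_eps_delta by metis
  obtain r1 where "r1 > 0" "ball y0 r1 \<subseteq> V" using assms(2,3) openE by blast
  show ?thesis
  proof (rule that[of "min r1 d / 2"])
    show "min r1 d / 2 > 0" using \<open>r1 > 0\<close> \<open>d > 0\<close> by simp
    show "cball y0 (min r1 d / 2) \<subseteq> V" using \<open>ball y0 r1 \<subseteq> V\<close> \<open>r1 > 0\<close> by (auto simp: subset_eq)
    show "\<psi> ` cball y0 (min r1 d / 2) \<subseteq> cball (\<psi> y0) \<rho>"
    proof
      fix z assume "z \<in> \<psi> ` cball y0 (min r1 d / 2)"
      then obtain y where "z = \<psi> y" "dist y0 y \<le> min r1 d / 2" by auto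
      then have "dist y y0 < d" using \<open>d > 0\<close> by (simp add: dist_commute)
      then have "dist (\<psi> y) (\<psi> y0) < \<rho>" by (rule d)
      then show "z \<in> cball (\<psi> y0) \<rho>" using \<open>z = \<psi> y\<close> by (simp add: dist_commute)
    qed
  qed
qed

lemma smooth_on_lipschitz_on:
  fixes f :: "'a::euclidean_space \<Rightarrow> 'b::euclidean_space"
  assumes f: "smooth_on U f" and "open U" and K: "compact K" "convex K" "K \<subseteq> U"
  shows "\<exists>C. C-lipschitz_on K f"
proof -
  have bound: "\<exists>B. \<forall>x\<in>K. norm (dd [i] f x) \<le> B" for i
  proof -
    have "continuous_on K (dd [i] f)"
      using smooth_on_imp_continuous_on[OF smooth_on_dd[OF f] \<open>open U\<close>] K(3) continuous_on_subset by blast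
    then obtain B where "\<And>x. x \<in> K \<Longrightarrow> norm (dd [i] f x) \<le> B"
      using continuous_on_compact_norm_bound[OF K(1)] by metis
    then show ?thesis by blast
  qed
  obtain B where "\<forall>i. \<forall>x\<in>K. norm (dd [i] f x) \<le> B i"
    using choice[of "\<lambda>i B. \<forall>x\<in>K. norm (dd [i] f x) \<le> B"] bound by blast
  then have B: "\<And>i x. x \<in> K \<Longrightarrow> norm (frechet_derivative f (at x) i) \<le> B i" by simp
  define C where "C = (\<Sum>i\<in>Basis. \<bar>B i\<bar>)"
  show ?thesis
  proof (intro exI[of _ C] bounded_derivative_imp_lipschitz[OF _ K(2)])
    fix x assume "x \<in> K"
    then have f': "(f has_derivative frechet_derivative f (at x)) (at x)"
      using smooth_on_has_derivative[OF f] K(3) by blast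
    then show "(f has_derivative frechet_derivative f (at x)) (at x within K)"
      by (rule has_derivative_at_withinI)
    show "onorm (frechet_derivative f (at x)) \<le> C"
    proof (rule onorm_le)
      fix v :: 'a
      have "norm (frechet_derivative f (at x) v) = norm (\<Sum>i\<in>Basis. (v \<bullet> i) *\<^sub>R frechet_derivative f (at x) i)"
        by (subst linear_eq_sum_Basis[OF has_derivative_linear[OF f']]) (rule refl)
      also have "\<dots> \<le> (\<Sum>i\<in>Basis. norm ((v \<bullet> i) *\<^sub>R frechet_derivative f (at x) i))"
        by (rule norm_sum)
      also have "\<dots> \<le> (\<Sum>i\<in>Basis. norm v * \<bar>B i\<bar>)"
      proof (rule sum_mono)
        fix i :: 'a assume "i \<in> Basis"
        have "\<bar>v \<bullet> i\<bar> * norm (frechet_derivative f (at x) i) \<le> norm v * \<bar>B i\<bar>"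
          using B[OF \<open>x \<in> K\<close>, of i] Basis_le_norm[OF \<open>i \<in> Basis\<close>, of v] by (intro mult_mono) auto
        then show "norm ((v \<bullet> i) *\<^sub>R frechet_derivative f (at x) i) \<le> norm v * \<bar>B i\<bar>" by simp
      qed
      also have "\<dots> = C * norm v" unfolding C_def by (simp add: sum_distrib_left mult.commute)
      finally show "norm (frechet_derivative f (at x) v) \<le> C * norm v" .
    qed
  qed (simp add: C_def sum_nonneg)
qed

lemma lipschitz_on_scaleR:
  fixes a :: "'a::metric_space \<Rightarrow> real" and b :: "'a \<Rightarrow> 'b::real_normed_vector"
  assumes a: "Ca-lipschitz_on K a" and b: "Cb-lipschitz_on K b"
    and A: "\<And>x. x \<in> K \<Longrightarrow> \<bar>a x\<bar> \<le> A" and B: "\<And>x. x \<in> K \<Longrightarrow> norm (b x) \<le> B"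
    and "A \<ge> 0" "B \<ge> 0"
  shows "(A * Cb + B * Ca)-lipschitz_on K (\<lambda>x. a x *\<^sub>R b x)"
proof (rule lipschitz_onI)
  have "Ca \<ge> 0" "Cb \<ge> 0" using a b lipschitz_on_nonneg by blast+
  then show "0 \<le> A * Cb + B * Ca" using \<open>A \<ge> 0\<close> \<open>B \<ge> 0\<close> by simp
  fix x y assume xy: "x \<in> K" "y \<in> K"
  have "a x *\<^sub>R b x - a y *\<^sub>R b y = a x *\<^sub>R (b x - b y) + (a x - a y) *\<^sub>R b y"
    by (simp add: algebra_simps)
  then have "dist (a x *\<^sub>R b x) (a y *\<^sub>R b y) \<le> norm (a x *\<^sub>R (b x - b y)) + norm ((a x - a y) *\<^sub>R b y)"
    by (metis dist_norm norm_triangle_ineq)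
  also have "\<dots> = \<bar>a x\<bar> * norm (b x - b y) + \<bar>a x - a y\<bar> * norm (b y)" by simp
  also have "\<dots> \<le> A * (Cb * dist x y) + (Ca * dist x y) * B"
  proof (intro add_mono mult_mono)
    show "norm (b x - b y) \<le> Cb * dist x y" using lipschitz_onD[OF b xy] by (simp add: dist_norm)
    show "\<bar>a x - a y\<bar> \<le> Ca * dist x y" using lipschitz_onD[OF a xy] by (simp add: dist_real_def)
  qed (use A B xy \<open>A \<ge> 0\<close> \<open>Ca \<ge> 0\<close> in auto)
  finally show "dist (a x *\<^sub>R b x) (a y *\<^sub>R b y) \<le> (A * Cb + B * Ca) * dist x y"
    by (simp add: algebra_simps)
qed

lemma lipschitz_on_sum:
  fixes f :: "'i \<Rightarrow> 'a::metric_space \<Rightarrow> 'b::real_normed_vector"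
  assumes "finite I" "\<And>i. i \<in> I \<Longrightarrow> \<exists>C. C-lipschitz_on K (f i)"
  shows "\<exists>C. C-lipschitz_on K (\<lambda>x. \<Sum>i\<in>I. f i x)"
  using assms
proof (induction I rule: finite_induct)
  case empty
  then show ?case using lipschitz_on_constant by auto
next
  case (insert j I)
  then obtain C1 C2 where "C1-lipschitz_on K (\<lambda>x. \<Sum>i\<in>I. f i x)" "C2-lipschitz_on K (f j)" by blast
  then have "(C2 + C1)-lipschitz_on K (\<lambda>x. f j x + (\<Sum>i\<in>I. f i x))"
    by (intro lipschitz_on_add)
  then show ?case using insert by auto
qed

lemma lipschitz_on_inner_right: "(norm e)-lipschitz_on S (\<lambda>v. v \<bullet> e)"
proof (rule lipschitz_onI)
  fix x y :: 'a
  have "\<bar>(x - y) \<bullet> e\<bar> \<le> norm (x - y) * norm e" by (rule Cauchy_Schwarz_ineq2)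
  then show "dist (x \<bullet> e) (y \<bullet> e) \<le> norm e * dist x y"
    by (simp add: dist_real_def dist_norm inner_diff_left mult.commute)
qed simp

lemma smooth_on_compose_lipschitz_on:
  fixes F :: "'a::euclidean_space \<Rightarrow> 'b::euclidean_space"
  assumes F: "smooth_on U F" "open U" and C: "compact C" "convex C" "C \<subseteq> U"
    and \<psi>: "C\<psi>-lipschitz_on K \<psi>" "\<psi> ` K \<subseteq> C"
  shows "\<exists>L. L-lipschitz_on K (\<lambda>y. F (\<psi> y))" and "\<exists>B>0. \<forall>y\<in>K. norm (F (\<psi> y)) \<le> B"
proof -
  obtain L where "L-lipschitz_on C F"
    using smooth_on_lipschitz_on[OF F C] by blast
  then have "(L * C\<psi>)-lipschitz_on K (\<lambda>y. F (\<psi> y))"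
    using lipschitz_on_compose2[OF \<psi>(1) lipschitz_on_subset[OF _ \<psi>(2)]] by blast
  then show "\<exists>L. L-lipschitz_on K (\<lambda>y. F (\<psi> y))" by blast
  have "continuous_on C F"
    using smooth_on_imp_continuous_on[OF F] C(3) continuous_on_subset by blast
  then obtain B where "B > 0" "\<And>x. x \<in> C \<Longrightarrow> norm (F x) \<le> B"
    using continuous_on_compact_norm_bound[OF C(1)] by metis
  then show "\<exists>B>0. \<forall>y\<in>K. norm (F (\<psi> y)) \<le> B" using \<psi>(2) by blast
qed

lemma lipschitz_on_pushforward:
  fixes \<phi> :: "'a::euclidean_space \<Rightarrow> 'b::euclidean_space" and h :: "'a \<Rightarrow> 'a"
  assumes \<phi>: "smooth_on U \<phi>" and h: "smooth_on U h" and "open U"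
    and C: "compact C" "convex C" "C \<subseteq> U"
    and \<psi>: "C\<psi>-lipschitz_on K \<psi>" "\<psi> ` K \<subseteq> C"
  shows "\<exists>L. L-lipschitz_on K (\<lambda>y. frechet_derivative \<phi> (at (\<psi> y)) (h (\<psi> y)))"
proof -
  note lip_comp = smooth_on_compose_lipschitz_on(1)[OF _ \<open>open U\<close> C \<psi>]
  note bound = smooth_on_compose_lipschitz_on(2)[OF _ \<open>open U\<close> C \<psi>]
  have term_lip: "\<exists>L. L-lipschitz_on K (\<lambda>y. (h (\<psi> y) \<bullet> i) *\<^sub>R dd [i] \<phi> (\<psi> y))" if "i \<in> Basis" for i
  proof -
    obtain Ch where "Ch-lipschitz_on K (\<lambda>y. h (\<psi> y))" using lip_comp[OF h] by blast
    then have Ca: "(norm i * Ch)-lipschitz_on K (\<lambda>y. h (\<psi> y) \<bullet> i)"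
      by (rule lipschitz_on_compose2[OF _ lipschitz_on_inner_right])
    obtain Cb where Cb: "Cb-lipschitz_on K (\<lambda>y. dd [i] \<phi> (\<psi> y))" using lip_comp[OF smooth_on_dd[OF \<phi>]] by blast
    obtain A where A: "A > 0" "\<forall>y\<in>K. norm (h (\<psi> y)) \<le> A" using bound[OF h] by blast
    then have "\<bar>h (\<psi> y) \<bullet> i\<bar> \<le> A" if "y \<in> K" for y
      using Basis_le_norm[OF \<open>i \<in> Basis\<close>] that by (meson order_trans)
    moreover obtain B where "B > 0" "\<forall>y\<in>K. norm (dd [i] \<phi> (\<psi> y)) \<le> B" using bound[OF smooth_on_dd[OF \<phi>]] by blast
    ultimately show ?thesis
      using lipschitz_on_scaleR[OF Ca Cb] \<open>A > 0\<close> by (meson less_imp_le)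
  qed
  have expand: "frechet_derivative \<phi> (at (\<psi> y)) (h (\<psi> y)) = (\<Sum>i\<in>Basis. (h (\<psi> y) \<bullet> i) *\<^sub>R dd [i] \<phi> (\<psi> y))"
    if "y \<in> K" for y
  proof -
    have "\<psi> y \<in> U" using that \<psi>(2) C(3) by blast
    then have "linear (frechet_derivative \<phi> (at (\<psi> y)))"
      using smooth_on_has_derivative[OF \<phi>] has_derivative_linear by blast
    then show ?thesis by (simp add: linear_eq_sum_Basis[of _ "h (\<psi> y)"])
  qed
  obtain L where "L-lipschitz_on K (\<lambda>y. \<Sum>i\<in>Basis. (h (\<psi> y) \<bullet> i) *\<^sub>R dd [i] \<phi> (\<psi> y))"
    using lipschitz_on_sum[OF finite_Basis, of K "\<lambda>i y. (h (\<psi> y) \<bullet> i) *\<^sub>R dd [i] \<phi> (\<psi> y)"] term_lip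
    by blast
  then have "L-lipschitz_on K (\<lambda>y. frechet_derivative \<phi> (at (\<psi> y)) (h (\<psi> y)))"
    by (rule lipschitz_on_transform) (simp add: expand)
  then show ?thesis by blast
qed

section \<open>Slice charts\<close>

lemma submanifold_slice_chartE:
  fixes M :: "'a::euclidean_space set"
  assumes "submanifold M m" "q \<in> M"
  obtains U V and \<phi> \<psi> :: "'a \<Rightarrow> 'a" and B where "open U" "open V" "q \<in> U" "\<phi> q \<in> V"
    "smooth_on U \<phi>" "smooth_on V \<psi>" "\<And>x. x \<in> U \<Longrightarrow> \<psi> (\<phi> x) = x"
    "\<And>x i. x \<in> M \<inter> U \<Longrightarrow> i \<in> Basis - B \<Longrightarrow> \<phi> x \<bullet> i = 0"
    "\<And>y. y \<in> V \<Longrightarrow> \<forall>i\<in>Basis - B. y \<bullet> i = 0 \<Longrightarrow> \<psi> y \<in> M \<inter> U \<and> \<phi> (\<psi> y) = y"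
proof -
  have "\<exists>U V (\<phi>::'a \<Rightarrow> 'a) \<psi> B. open U \<and> open V \<and> q \<in> U \<and> smooth_on U \<phi> \<and> smooth_on V \<psi> \<and>
      (\<forall>x\<in>U. \<psi> (\<phi> x) = x) \<and> \<phi> ` (M \<inter> U) = V \<inter> {y. \<forall>i\<in>Basis - B. y \<bullet> i = 0}"
    using assms unfolding submanifold_def by meson
  then obtain U V and \<phi> \<psi> :: "'a \<Rightarrow> 'a" and B where "open U" "open V" "q \<in> U"
    and "smooth_on U \<phi>" "smooth_on V \<psi>" and inv: "\<forall>x\<in>U. \<psi> (\<phi> x) = x"
    and chart: "\<phi> ` (M \<inter> U) = V \<inter> {y. \<forall>i\<in>Basis - B. y \<bullet> i = 0}"
    by blast
  have "\<phi> x \<in> V \<and> (\<forall>i\<in>Basis - B. \<phi> x \<bullet> i = 0)" if "x \<in> M \<inter> U" for x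
    using that chart by blast
  moreover have "\<psi> y \<in> M \<inter> U \<and> \<phi> (\<psi> y) = y" if "y \<in> V" "\<forall>i\<in>Basis - B. y \<bullet> i = 0" for y
  proof -
    have "y \<in> \<phi> ` (M \<inter> U)" unfolding chart using that by blast
    then obtain x where "x \<in> M \<inter> U" "y = \<phi> x" by blast
    then show ?thesis using inv by simp
  qed
  ultimately show ?thesis
    using that[of U V \<phi> \<psi> B] \<open>open U\<close> \<open>open V\<close> \<open>q \<in> U\<close> \<open>q \<in> M\<close> \<open>smooth_on U \<phi>\<close> \<open>smooth_on V \<psi>\<close> inv
    by blast
qed

lemma frechet_derivative_tangent_in_slice:
  fixes \<phi> :: "'a::euclidean_space \<Rightarrow> 'b::euclidean_space"
  assumes "open U" "x \<in> U" and "\<phi> differentiable (at x)"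
    and slice: "\<And>z. z \<in> M \<inter> U \<Longrightarrow> \<phi> z \<bullet> e = 0"
    and v: "v \<in> tangent_space M x"
  shows "frechet_derivative \<phi> (at x) v \<bullet> e = 0"
proof -
  obtain c \<epsilon> where c: "\<epsilon> > 0" "c 0 = x" "\<And>t. t \<in> {-\<epsilon><..<\<epsilon>} \<Longrightarrow> c t \<in> M"
    "(c has_vector_derivative v) (at 0)"
    using v unfolding tangent_space_def by blast
  define \<phi>' where "\<phi>' = frechet_derivative \<phi> (at x)"
  have "(\<phi> has_derivative \<phi>') (at x)"
    using \<open>\<phi> differentiable (at x)\<close> frechet_derivative_works unfolding \<phi>'_def by blast
  then have "((\<phi> \<circ> c) has_derivative (\<phi>' \<circ> (\<lambda>h. h *\<^sub>R v))) (at 0)"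
    using diff_chain_at[OF c(4)[unfolded has_vector_derivative_def]] c(2) by simp
  then have D: "((\<lambda>t. \<phi> (c t) \<bullet> e) has_derivative (\<lambda>h. \<phi>' (h *\<^sub>R v) \<bullet> e)) (at 0)"
    using bounded_linear.has_derivative[OF bounded_linear_inner_left] by (simp add: o_def)
  obtain r where "r > 0" "ball x r \<subseteq> U" using \<open>open U\<close> \<open>x \<in> U\<close> openE by blast
  obtain d where "d > 0" and d: "\<And>t. dist t 0 < d \<Longrightarrow> dist (c t) x < r"
    using has_vector_derivative_continuous[OF c(4)] \<open>r > 0\<close> c(2)
    unfolding continuous_at_eps_delta by metis
  have "\<phi> (c t) \<bullet> e = 0" if "t \<in> ball 0 (min d \<epsilon>)" for t
  proof -
    have "c t \<in> M" using c(3) that by (auto simp: dist_real_def abs_less_iff)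
    moreover have "c t \<in> U" using d[of t] that \<open>ball x r \<subseteq> U\<close> by (auto simp: dist_commute)
    ultimately show ?thesis using slice by blast
  qed
  then have "((\<lambda>t::real. 0::real) has_derivative (\<lambda>h. \<phi>' (h *\<^sub>R v) \<bullet> e)) (at 0)"
    by (intro has_derivative_transform_within_open[OF D, of "ball 0 (min d \<epsilon>)"])
      (use \<open>d > 0\<close> c(1) in auto)
  then have "(\<lambda>h. \<phi>' (h *\<^sub>R v) \<bullet> e) = (\<lambda>h. 0)"
    using has_derivative_unique has_derivative_const by blast
  then show ?thesis unfolding \<phi>'_def by (metis scale_one)
qed

lemma has_vector_derivative_left_inverse:
  fixes \<phi> \<psi> :: "'a::euclidean_space \<Rightarrow> 'a"
  assumes "open U" "x \<in> U" "\<And>z. z \<in> U \<Longrightarrow> \<psi> (\<phi> z) = z"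
    and "\<phi> differentiable (at x)" "\<psi> differentiable (at (\<phi> x))"
    and y: "(y has_vector_derivative frechet_derivative \<phi> (at x) v) (at t)" "y t = \<phi> x"
  shows "((\<lambda>t. \<psi> (y t)) has_vector_derivative v) (at t)"
proof -
  have \<phi>': "(\<phi> has_derivative frechet_derivative \<phi> (at x)) (at x)"
    and \<psi>': "(\<psi> has_derivative frechet_derivative \<psi> (at (\<phi> x))) (at (\<phi> x))"
    using assms(4,5) frechet_derivative_works by blast+
  have "((\<psi> \<circ> \<phi>) has_derivative (frechet_derivative \<psi> (at (\<phi> x)) \<circ> frechet_derivative \<phi> (at x))) (at x)"
    by (rule diff_chain_at[OF \<phi>' \<psi>'])
  moreover have "((\<psi> \<circ> \<phi>) has_derivative (\<lambda>h. h)) (at x)"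
    by (rule has_derivative_transform_within_open[OF has_derivative_ident assms(1,2)]) (use assms(3) in auto)
  ultimately have inv: "frechet_derivative \<psi> (at (\<phi> x)) (frechet_derivative \<phi> (at x) v) = v"
    using has_derivative_unique by (metis comp_apply)
  have "((\<psi> \<circ> y) has_vector_derivative frechet_derivative \<psi> (at (y t)) (frechet_derivative \<phi> (at x) v)) (at t)"
    by (rule vector_derivative_diff_chain_within[OF y(1)]) (use \<psi>' y(2) in \<open>simp add: has_derivative_at_withinI\<close>)
  then show ?thesis using inv y(2) by (simp add: o_def)
qed

section \<open>Integral equations and local flows\<close>

lemma norm_integral_diff_lipschitz:
  fixes G :: "'a::banach \<Rightarrow> 'b::banach"
  assumes lip: "C-lipschitz_on UNIV G" and "continuous_on {0..s} f" "continuous_on {0..s} g"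
    and close: "\<And>u. u \<in> {0..s} \<Longrightarrow> dist (f u) (g u) \<le> d" and "0 \<le> s"
  shows "norm (integral {0..s} (\<lambda>u. G (f u)) - integral {0..s} (\<lambda>u. G (g u))) \<le> C * d * s"
proof -
  have cG: "continuous_on {0..s} (\<lambda>u. G (k u))" if "continuous_on {0..s} k" for k
    using continuous_on_compose2[OF lipschitz_on_continuous_on[OF lip] that] by blast
  have "norm (integral {0..s} (\<lambda>u. G (f u)) - integral {0..s} (\<lambda>u. G (g u)))
      = norm (integral {0..s} (\<lambda>u. G (f u) - G (g u)))"
    using integral_diff[OF integrable_continuous_interval integrable_continuous_interval, OF cG cG]
      assms(2,3) by simp
  also have "\<dots> \<le> C * d * (s - 0)"
  proof (rule integral_bound)
    fix u assume "u \<in> {0..s}"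
    have "norm (G (f u) - G (g u)) \<le> C * dist (f u) (g u)"
      using lipschitz_onD[OF lip] by (simp add: dist_norm)
    also have "\<dots> \<le> C * d"
      using close[OF \<open>u \<in> {0..s}\<close>] lipschitz_on_nonneg[OF lip] by (rule mult_left_mono)
    finally show "norm (G (f u) - G (g u)) \<le> C * d" .
  qed (use assms(2,3,5) cG in \<open>auto intro!: continuous_on_diff\<close>)
  finally show ?thesis by simp
qed

lemma lipschitz_integral_equation_solvable:
  fixes G :: "'a::banach \<Rightarrow> 'a"
  assumes lip: "C-lipschitz_on UNIV G" and "\<tau> > 0" "C * \<tau> < 1"
  shows "\<exists>y. continuous_on {0..\<tau>} y \<and> (\<forall>t\<in>{0..\<tau>}. y t = y0 + integral {0..t} (\<lambda>s. G (y s)))"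
proof -
  define F where "F f t = y0 + integral {0..t} (\<lambda>s. G (apply_bcontfun f s))" for f :: "real \<Rightarrow>\<^sub>C 'a" and t
  have "continuous_on {0..\<tau>} (F f)" for f
  proof -
    have "continuous_on {0..\<tau>} (\<lambda>s. G (apply_bcontfun f s))"
      by (rule continuous_on_compose2[OF lipschitz_on_continuous_on[OF lip]]) auto
    then show ?thesis
      unfolding F_def by (intro continuous_intros indefinite_integral_continuous_1 integrable_continuous_interval)
  qed
  \<comment> \<open>the Picard operator, made constant outside [0, \<tau>] so that it acts on bounded continuous functions\<close>
  then have "\<exists>h::real \<Rightarrow>\<^sub>C 'a. \<forall>t. apply_bcontfun h t = F f (clamp 0 \<tau> t)" for f
    by (metis cbox_interval continuous_on_cbox_bcontfunE)
  then obtain \<Phi> where \<Phi>: "\<And>f t. apply_bcontfun (\<Phi> f) t = F f (clamp 0 \<tau> t)" by metis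
  have "dist (\<Phi> f) (\<Phi> g) \<le> (C * \<tau>) * dist f g" for f g
  proof (rule dist_bound)
    fix t
    define s where "s = clamp 0 \<tau> t"
    have "0 \<le> s" "s \<le> \<tau>" using clamp_in_interval[of 0 \<tau> t] \<open>\<tau> > 0\<close> unfolding s_def by auto
    have "dist (\<Phi> f t) (\<Phi> g t) = norm (integral {0..s} (\<lambda>u. G (f u)) - integral {0..s} (\<lambda>u. G (g u)))"
      unfolding \<Phi> F_def s_def[symmetric] dist_norm by simp
    also have "\<dots> \<le> C * dist f g * s"
      by (rule norm_integral_diff_lipschitz[OF lip]) (auto simp: dist_bounded \<open>0 \<le> s\<close>)
    also have "\<dots> \<le> C * dist f g * \<tau>"
      using \<open>s \<le> \<tau>\<close> lipschitz_on_nonneg[OF lip] by (intro mult_left_mono) auto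
    finally show "dist (\<Phi> f t) (\<Phi> g t) \<le> (C * \<tau>) * dist f g" by (simp add: algebra_simps)
  qed
  then obtain x where "\<Phi> x = x"
    using Banach_fix[OF complete_UNIV UNIV_not_empty, of "C * \<tau>" \<Phi>] lipschitz_on_nonneg[OF lip] assms(2,3)
    by (auto simp: zero_le_mult_iff)
  then have "apply_bcontfun x t = F x t" if "t \<in> {0..\<tau>}" for t
    using \<Phi>[of x t] that by (simp add: cbox_interval)
  then show ?thesis unfolding F_def by (intro exI[of _ "apply_bcontfun x"]) auto
qed

lemma integral_equation_has_vector_derivative:
  fixes G :: "'a::banach \<Rightarrow> 'a" and \<tau> :: real
  assumes cont: "continuous_on {0..\<tau>} (\<lambda>s. G (y s))"
    and y: "\<And>t. t \<in> {0..\<tau>} \<Longrightarrow> y t = y0 + integral {0..t} (\<lambda>s. G (y s))"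
    and t: "t \<in> {0<..<\<tau>}"
  shows "(y has_vector_derivative G (y t)) (at t)"
proof -
  have "t \<in> {0..\<tau>}" using t by auto
  have "((\<lambda>u. y0 + integral {0..u} (\<lambda>s. G (y s))) has_vector_derivative G (y t)) (at t within {0..\<tau>})"
    unfolding add.commute[of y0] has_vector_derivative_add_const
    by (rule integral_has_vector_derivative[OF cont \<open>t \<in> {0..\<tau>}\<close>])
  then have "(y has_vector_derivative G (y t)) (at t within {0..\<tau>})"
    by (rule has_vector_derivative_transform[OF \<open>t \<in> {0..\<tau>}\<close>, rotated]) (use y in auto)
  then have "(y has_vector_derivative G (y t)) (at t within {0<..<\<tau>})"
    by (rule has_vector_derivative_within_subset) auto
  then show ?thesis using has_vector_derivative_within_open[OF t open_greaterThanLessThan] by blast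
qed

lemma integral_equation_lipschitz_on:
  fixes G :: "'a::banach \<Rightarrow> 'a" and \<tau> :: real
  assumes cont: "continuous_on {0..\<tau>} (\<lambda>s. G (y s))"
    and y: "\<And>t. t \<in> {0..\<tau>} \<Longrightarrow> y t = y0 + integral {0..t} (\<lambda>s. G (y s))"
    and bound: "\<And>s. s \<in> {0..\<tau>} \<Longrightarrow> norm (G (y s)) \<le> B" and "B \<ge> 0"
  shows "B-lipschitz_on {0..\<tau>} y"
proof -
  have main: "norm (y t - y s) \<le> B * (t - s)" if "0 \<le> s" "s \<le> t" "t \<le> \<tau>" for s t :: real
  proof -
    have int: "(\<lambda>s. G (y s)) integrable_on {a..b}" if "0 \<le> a" "b \<le> \<tau>" for a b
      by (rule integrable_continuous_interval, rule continuous_on_subset[OF cont]) (use that in auto)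
    have "integral {0..s} (\<lambda>s. G (y s)) + integral {s..t} (\<lambda>s. G (y s)) = integral {0..t} (\<lambda>s. G (y s))"
      by (rule Henstock_Kurzweil_Integration.integral_combine) (use that int in auto)
    then have "y t - y s = integral {s..t} (\<lambda>s. G (y s))"
      using y[of t] y[of s] that by (auto simp: algebra_simps)
    also have "norm \<dots> \<le> B * (t - s)"
      by (rule integral_bound) (use that bound in \<open>auto intro: continuous_on_subset[OF cont]\<close>)
    finally show ?thesis .
  qed
  show ?thesis
  proof (rule lipschitz_onI)
    fix s t assume "s \<in> {0..\<tau>}" "t \<in> {0..\<tau>}"
    then show "dist (y s) (y t) \<le> B * dist s t"
      using main[of s t] main[of t s]
      by (cases "s \<le> t") (auto simp: dist_norm dist_real_def norm_minus_commute)
  qed fact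
qed

lemma lipschitz_on_compose_closest_point:
  fixes Z :: "'a::euclidean_space \<Rightarrow> 'b::metric_space"
  assumes Z: "C-lipschitz_on K Z" and "convex K" "closed K" "K \<noteq> {}"
  shows "C-lipschitz_on UNIV (\<lambda>y. Z (closest_point K y))"
proof -
  have "1-lipschitz_on UNIV (closest_point K)"
    by (rule lipschitz_onI) (use closest_point_lipschitz[OF assms(2-4)] in auto)
  then have "(C * 1)-lipschitz_on UNIV (\<lambda>y. Z (closest_point K y))"
    by (rule lipschitz_on_compose2[OF _ lipschitz_on_subset[OF Z]])
      (use closest_point_in_set[OF assms(3,4)] in auto)
  then show ?thesis by simp
qed

lemma lipschitz_vector_field_local_flow:
  fixes Z :: "'a::euclidean_space \<Rightarrow> 'a" and y0 :: 'a and E :: "'a set" and r :: real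
  defines "K \<equiv> cball y0 r \<inter> {y. \<forall>e\<in>E. y \<bullet> e = 0}"
  assumes Z: "CZ-lipschitz_on K Z" and tangent: "\<And>y e. y \<in> K \<Longrightarrow> e \<in> E \<Longrightarrow> Z y \<bullet> e = 0"
    and y0: "\<forall>e\<in>E. y0 \<bullet> e = 0" and "r > 0"
  shows "\<exists>\<tau>>0. \<exists>y B. y 0 = y0 \<and> y ` {0..\<tau>} \<subseteq> K \<and> B-lipschitz_on {0..\<tau>} y \<and>
           (\<forall>t\<in>{0<..<\<tau>}. (y has_vector_derivative Z (y t)) (at t))"
proof -
  have L: "{y. \<forall>e\<in>E. y \<bullet> e = 0} = (\<Inter>e\<in>E. {y. e \<bullet> y = 0})" by (auto simp: inner_commute)
  have "y0 \<in> K" unfolding K_def using y0 \<open>r > 0\<close> by simp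
  then have "K \<noteq> {}" by blast
  have "compact K" "convex K"
    unfolding K_def L by (auto intro!: convex_Int convex_INT convex_hyperplane closed_hyperplane)
  then have "closed K" using compact_imp_closed by blast
  obtain B where "B > 0" and B: "\<And>y. y \<in> K \<Longrightarrow> norm (Z y) \<le> B"
    using continuous_on_compact_norm_bound[OF \<open>compact K\<close> lipschitz_on_continuous_on[OF Z]] by metis
  define G where "G y = Z (closest_point K y)" for y
  have cp: "closest_point K y \<in> K" for y using closest_point_in_set[OF \<open>closed K\<close> \<open>K \<noteq> {}\<close>] .
  have Glip: "CZ-lipschitz_on UNIV G"
    unfolding G_def using lipschitz_on_compose_closest_point[OF Z \<open>convex K\<close> \<open>closed K\<close> \<open>K \<noteq> {}\<close>] .
  have "CZ \<ge> 0" using Z lipschitz_on_nonneg by blast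
  \<comment> \<open>short enough for the Picard operator to contract and for the curve to stay in cball y0 r\<close>
  obtain \<tau> where "\<tau> > 0" "\<tau> < 1 / (CZ + 1)" "\<tau> < r / B"
    using field_lbound_gt_zero[of "1 / (CZ + 1)" "r / B"] \<open>CZ \<ge> 0\<close> \<open>B > 0\<close> \<open>r > 0\<close> by auto
  then have "CZ * \<tau> < 1" "B * \<tau> \<le> r"
    using \<open>CZ \<ge> 0\<close> \<open>B > 0\<close> by (auto simp: field_simps)
  obtain y where "continuous_on {0..\<tau>} y"
    and y: "\<And>t. t \<in> {0..\<tau>} \<Longrightarrow> y t = y0 + integral {0..t} (\<lambda>s. G (y s))"
    using lipschitz_integral_equation_solvable[OF Glip \<open>\<tau> > 0\<close> \<open>CZ * \<tau> < 1\<close>] by blast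
  have cont: "continuous_on {0..\<tau>} (\<lambda>s. G (y s))"
    by (rule continuous_on_compose2[OF lipschitz_on_continuous_on[OF Glip] \<open>continuous_on {0..\<tau>} y\<close>]) auto
  have "y 0 = y0" using y[of 0] \<open>\<tau> > 0\<close> by simp
  have ylip: "B-lipschitz_on {0..\<tau>} y"
    by (rule integral_equation_lipschitz_on[OF cont y]) (use B cp \<open>B > 0\<close> in \<open>auto simp: G_def\<close>)
  have yK: "y t \<in> K" if "t \<in> {0..\<tau>}" for t
  proof -
    have "dist (y t) y0 \<le> B * \<tau>"
      using lipschitz_onD[OF ylip that, of 0] that \<open>y 0 = y0\<close> \<open>B > 0\<close> \<open>\<tau> > 0\<close>
      by (auto simp: dist_real_def intro: order_trans[OF _ mult_left_mono])
    moreover have "y t \<bullet> e = 0" if "e \<in> E" for e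
    proof -
      have "integral {0..t} (\<lambda>s. G (y s)) \<bullet> e = integral {0..t} (\<lambda>s. G (y s) \<bullet> e)"
        using \<open>t \<in> {0..\<tau>}\<close> cont by (simp add: integrable_continuous_interval continuous_on_subset)
      also have "\<dots> = 0" using tangent[OF cp that] by (simp add: G_def)
      finally show ?thesis using y[OF \<open>t \<in> {0..\<tau>}\<close>] y0 that by (simp add: inner_add_left)
    qed
    ultimately show ?thesis unfolding K_def using \<open>B * \<tau> \<le> r\<close> by (auto simp: dist_commute)
  qed
  have "(y has_vector_derivative Z (y t)) (at t)" if "t \<in> {0<..<\<tau>}" for t
    using integral_equation_has_vector_derivative[OF cont y that] closest_point_self[OF yK, of t] that
    by (simp add: G_def)
  then show ?thesis using \<open>\<tau> > 0\<close> \<open>y 0 = y0\<close> yK ylip by blast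
qed

section \<open>Existence of a chronological future\<close>

lemma integral_curve_of_time_orientation_chron:
  assumes to: "time_orientation M D g T" and "a < b"
    and lip: "C-lipschitz_on {a..b} \<gamma>" and img: "\<gamma> ` {a..b} \<subseteq> M"
    and der: "\<And>t. t \<in> {a<..<b} \<Longrightarrow> (\<gamma> has_vector_derivative T (\<gamma> t)) (at t)"
  shows "chron M D g T (\<gamma> a) (\<gamma> b)"
proof -
  have T: "T x \<in> D x" "g x (T x) (T x) < 0" if "x \<in> M" for x
    using to that unfolding time_orientation_def by auto
  have \<gamma>T: "T (\<gamma> t) \<in> D (\<gamma> t)" "g (\<gamma> t) (T (\<gamma> t)) (T (\<gamma> t)) < 0" if "t \<in> {a<..<b}" for t
  proof -
    have "\<gamma> t \<in> M" using img that by auto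
    then show "T (\<gamma> t) \<in> D (\<gamma> t)" "g (\<gamma> t) (T (\<gamma> t)) (T (\<gamma> t)) < 0" by (rule T)+
  qed
  have vd: "\<gamma> differentiable (at t) \<and> vector_derivative \<gamma> (at t) = T (\<gamma> t)" if "t \<in> {a<..<b}" for t
    using der[OF that] vector_derivative_at differentiableI_vector by blast
  have ae_interior: "AE t in lebesgue. t \<in> {a..b} \<longrightarrow> P t" if "\<And>t. t \<in> {a<..<b} \<Longrightarrow> P t" for P
    using AE_lebesgue_neq[of a] AE_lebesgue_neq[of b] by eventually_elim (auto intro: that)
  have "continuous_on {a..b} (\<lambda>t. T (\<gamma> t))"
    using continuous_on_compose2[OF smooth_on_set_imp_continuous_on lipschitz_on_continuous_on[OF lip] img]
      to unfolding time_orientation_def by blast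
  then have int: "(\<lambda>t. (norm (T (\<gamma> t)))\<^sup>2) integrable_on {a..b}"
    by (intro integrable_continuous_interval continuous_intros)
  have "(\<lambda>t. (norm (vector_derivative \<gamma> (at t)))\<^sup>2) integrable_on {a..b}"
    by (rule integrable_spike_finite[of "{a, b}", OF _ _ int]) (auto simp: vd)
  moreover have "AE t in lebesgue. t \<in> {a..b} \<longrightarrow> \<gamma> differentiable (at t) \<and> vector_derivative \<gamma> (at t) \<in> D (\<gamma> t)"
    by (rule ae_interior) (simp add: vd \<gamma>T)
  ultimately have "horizontal_curve M D \<gamma> a b"
    unfolding horizontal_curve_def using \<open>a < b\<close> img lipschitz_on_imp_absolutely_continuous_on[OF lip] by blast
  moreover have "timelike_fd g T \<gamma> a b"
    unfolding timelike_fd_def by (rule ae_interior) (simp add: vd \<gamma>T)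
  ultimately show ?thesis unfolding chron_def by blast
qed

lemma smooth_tangent_field_integral_curve:
  fixes M :: "'a::euclidean_space set"
  assumes "submanifold M m" "q \<in> M" and W: "open W" "q \<in> W" "smooth_on W h"
    and tangent: "\<And>x. x \<in> M \<inter> W \<Longrightarrow> h x \<in> tangent_space M x"
  shows "\<exists>\<tau>>0. \<exists>\<gamma> C. \<gamma> 0 = q \<and> \<gamma> ` {0..\<tau>} \<subseteq> M \<inter> W \<and> C-lipschitz_on {0..\<tau>} \<gamma> \<and>
           (\<forall>t\<in>{0<..<\<tau>}. (\<gamma> has_vector_derivative h (\<gamma> t)) (at t))"
proof -
  obtain U V and \<phi> \<psi> :: "'a \<Rightarrow> 'a" and B where "open U" "open V" "q \<in> U" "\<phi> q \<in> V"
    and \<phi>: "smooth_on U \<phi>" and \<psi>: "smooth_on V \<psi>" and inv: "\<And>x. x \<in> U \<Longrightarrow> \<psi> (\<phi> x) = x"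
    and slice: "\<And>x i. x \<in> M \<inter> U \<Longrightarrow> i \<in> Basis - B \<Longrightarrow> \<phi> x \<bullet> i = 0"
    and slice_inv: "\<And>y. y \<in> V \<Longrightarrow> \<forall>i\<in>Basis - B. y \<bullet> i = 0 \<Longrightarrow> \<psi> y \<in> M \<inter> U \<and> \<phi> (\<psi> y) = y"
    using submanifold_slice_chartE[OF assms(1,2)] by blast
  define y0 where "y0 = \<phi> q"
  have "y0 \<in> V" "\<psi> y0 = q" "\<forall>i\<in>Basis - B. y0 \<bullet> i = 0"
    using \<open>\<phi> q \<in> V\<close> inv slice \<open>q \<in> M\<close> \<open>q \<in> U\<close> unfolding y0_def by auto
  obtain \<rho> where "\<rho> > 0" and \<rho>: "cball q \<rho> \<subseteq> U \<inter> W"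
    using open_contains_cball[of "U \<inter> W"] \<open>open U\<close> \<open>q \<in> U\<close> W(1,2) by blast
  have "continuous (at y0) \<psi>"
    by (rule differentiable_imp_continuous_within, rule smooth_on_imp_differentiable[OF \<psi> \<open>y0 \<in> V\<close>])
  then obtain r where "r > 0" "cball y0 r \<subseteq> V" and r: "\<psi> ` cball y0 r \<subseteq> cball (\<psi> y0) \<rho>"
    by (rule continuous_at_cball_image[OF _ \<open>open V\<close> \<open>y0 \<in> V\<close> \<open>\<rho> > 0\<close>])
  note r = r[unfolded \<open>\<psi> y0 = q\<close>]
  define K where "K = cball y0 r \<inter> {y. \<forall>i\<in>Basis - B. y \<bullet> i = 0}"
  have K: "\<psi> y \<in> M \<inter> U \<inter> W \<and> \<phi> (\<psi> y) = y \<and> y \<in> V" if "y \<in> K" for y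
  proof -
    have "\<psi> y \<in> W" using r \<rho> that unfolding K_def by blast
    then show ?thesis using slice_inv[of y] \<open>cball y0 r \<subseteq> V\<close> that unfolding K_def by auto
  qed
  obtain C\<psi> where "C\<psi>-lipschitz_on (cball y0 r) \<psi>"
    using smooth_on_lipschitz_on[OF \<psi> \<open>open V\<close> _ _ \<open>cball y0 r \<subseteq> V\<close>] by auto
  then have \<psi>K: "C\<psi>-lipschitz_on K \<psi>" by (rule lipschitz_on_subset) (simp add: K_def)
  moreover have "\<psi> ` K \<subseteq> cball q \<rho>" using r unfolding K_def by blast
  ultimately obtain CZ where "CZ-lipschitz_on K (\<lambda>y. frechet_derivative \<phi> (at (\<psi> y)) (h (\<psi> y)))"
    using lipschitz_on_pushforward[OF smooth_on_subset[OF \<phi> Int_lower1]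
        smooth_on_subset[OF W(3) Int_lower2] open_Int[OF \<open>open U\<close> W(1)] compact_cball convex_cball \<rho>]
    by blast
  moreover have "frechet_derivative \<phi> (at (\<psi> y)) (h (\<psi> y)) \<bullet> i = 0" if "y \<in> K" "i \<in> Basis - B" for y i
  proof (rule frechet_derivative_tangent_in_slice[OF \<open>open U\<close>])
    show "\<psi> y \<in> U" "h (\<psi> y) \<in> tangent_space M (\<psi> y)" using K[OF \<open>y \<in> K\<close>] tangent by auto
    then show "\<phi> differentiable (at (\<psi> y))" using smooth_on_imp_differentiable[OF \<phi>] by blast
  qed (use slice \<open>i \<in> Basis - B\<close> in blast)
  ultimately have "\<exists>\<tau>>0. \<exists>y C. y 0 = y0 \<and> y ` {0..\<tau>} \<subseteq> K \<and> C-lipschitz_on {0..\<tau>} y \<and>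
      (\<forall>t\<in>{0<..<\<tau>}. (y has_vector_derivative frechet_derivative \<phi> (at (\<psi> (y t))) (h (\<psi> (y t)))) (at t))"
    unfolding K_def using \<open>r > 0\<close> \<open>\<forall>i\<in>Basis - B. y0 \<bullet> i = 0\<close>
    by (intro lipschitz_vector_field_local_flow) auto
  then obtain \<tau> y C where "\<tau> > 0" "y 0 = y0" and yK: "y ` {0..\<tau>} \<subseteq> K" and ylip: "C-lipschitz_on {0..\<tau>} y"
    and yder: "\<And>t. t \<in> {0<..<\<tau>} \<Longrightarrow> (y has_vector_derivative frechet_derivative \<phi> (at (\<psi> (y t))) (h (\<psi> (y t)))) (at t)"
    by blast
  have "((\<lambda>t. \<psi> (y t)) has_vector_derivative h (\<psi> (y t))) (at t)" if "t \<in> {0<..<\<tau>}" for t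
  proof (rule has_vector_derivative_left_inverse[OF \<open>open U\<close>, where x = "\<psi> (y t)" and \<psi> = \<psi> and \<phi> = \<phi> and y = y])
    have "y t \<in> K" using yK that by auto
    then show "\<psi> (y t) \<in> U" "y t = \<phi> (\<psi> (y t))" "\<psi> differentiable (at (\<phi> (\<psi> (y t))))"
      using K smooth_on_imp_differentiable[OF \<psi>] by auto
    then show "\<phi> differentiable (at (\<psi> (y t)))" using smooth_on_imp_differentiable[OF \<phi>] by blast
  qed (use inv yder[OF that] in blast)+
  moreover have "(C\<psi> * C)-lipschitz_on {0..\<tau>} (\<lambda>t. \<psi> (y t))"
    by (rule lipschitz_on_compose2[OF ylip lipschitz_on_subset[OF \<psi>K yK]])
  moreover have "(\<lambda>t. \<psi> (y t)) ` {0..\<tau>} \<subseteq> M \<inter> W" using yK K by blast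
  ultimately show ?thesis
    using \<open>\<tau> > 0\<close> \<open>y 0 = y0\<close> \<open>\<psi> y0 = q\<close> by (intro exI[of _ \<tau>] exI[of _ "\<lambda>t. \<psi> (y t)"]) auto
qed

lemma chron_future_exists:
  assumes sst: "sub_space_time M m D k g T" and "q \<in> M"
  shows "\<exists>p. chron M D g T q p"
proof -
  have to: "time_orientation M D g T" and "submanifold M m" and D: "\<forall>x\<in>M. D x \<subseteq> tangent_space M x"
    using sst unfolding sub_space_time_def smooth_distribution_def by auto
  obtain W h where W: "open W" "q \<in> W" "smooth_on W h" and hT: "\<forall>x\<in>M \<inter> W. h x = T x"
    using to \<open>q \<in> M\<close> unfolding time_orientation_def smooth_on_set_def by blast
  have "h x \<in> tangent_space M x" if "x \<in> M \<inter> W" for x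
    using to D hT that unfolding time_orientation_def by auto
  then obtain \<tau> \<gamma> C where "\<tau> > 0" "\<gamma> 0 = q" and img: "\<gamma> ` {0..\<tau>} \<subseteq> M \<inter> W"
    and lip: "C-lipschitz_on {0..\<tau>} \<gamma>" and der: "\<forall>t\<in>{0<..<\<tau>}. (\<gamma> has_vector_derivative h (\<gamma> t)) (at t)"
    using smooth_tangent_field_integral_curve[OF \<open>submanifold M m\<close> \<open>q \<in> M\<close> W] by blast
  have "(\<gamma> has_vector_derivative T (\<gamma> t)) (at t)" if "t \<in> {0<..<\<tau>}" for t
  proof -
    have "\<gamma> t \<in> M \<inter> W" using img that by auto
    then have "h (\<gamma> t) = T (\<gamma> t)" using hT by blast
    then show ?thesis using der that by metis
  qed
  then have "chron M D g T (\<gamma> 0) (\<gamma> \<tau>)"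
    using integral_curve_of_time_orientation_chron[OF to \<open>\<tau> > 0\<close> lip] img by blast
  then show ?thesis using \<open>\<gamma> 0 = q\<close> by blast
qed

section \<open>Compactness of the Alexandrov topology\<close>

lemma finite_serial_transitive_has_reflexive:
  assumes "finite P" "P \<noteq> {}" and serial: "\<And>x. x \<in> P \<Longrightarrow> \<exists>y\<in>P. R x y"
    and trans: "\<And>x y z. R x y \<Longrightarrow> R y z \<Longrightarrow> R x z"
  shows "\<exists>x\<in>P. R x x"
proof (rule ccontr)
  assume irrefl: "\<not> (\<exists>x\<in>P. R x x)"
  define pred where "pred x = {y \<in> P. R y x}" for x
  \<comment> \<open>a successor of x has strictly more predecessors than x, impossible at a maximum\<close>
  have "finite ((\<lambda>x. card (pred x)) ` P)" "(\<lambda>x. card (pred x)) ` P \<noteq> {}"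
    using assms(1,2) by simp_all
  then have "Max ((\<lambda>x. card (pred x)) ` P) \<in> (\<lambda>x. card (pred x)) ` P" by (rule Max_in)
  then obtain x where "x \<in> P" and x: "Max ((\<lambda>x. card (pred x)) ` P) = card (pred x)" by blast
  have max: "card (pred y) \<le> card (pred x)" if "y \<in> P" for y
    unfolding x[symmetric] using that \<open>finite ((\<lambda>x. card (pred x)) ` P)\<close> by simp
  obtain y where "y \<in> P" "R x y" using serial[OF \<open>x \<in> P\<close>] by blast
  have "pred x \<subset> pred y"
    using trans[OF _ \<open>R x y\<close>] \<open>x \<in> P\<close> \<open>R x y\<close> irrefl unfolding pred_def by blast
  then have "card (pred x) < card (pred y)"
    using \<open>finite P\<close> unfolding pred_def by (intro psubset_card_mono) auto
  then show False using max[OF \<open>y \<in> P\<close>] by simp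
qed

lemma topspace_alexandrov_topology: "topspace (alexandrov_topology M D g T) = M"
  unfolding alexandrov_topology_def topology_generated_by_topspace
  using chron_imp_mem[of M D g T] unfolding I_plus_def I_minus_def by blast

lemma openin_alexandrov_topology_I_minus:
  "p \<in> M \<Longrightarrow> openin (alexandrov_topology M D g T) (I_minus M D g T p)"
  unfolding alexandrov_topology_def openin_topology_generated_by_iff
  by (rule generate_topology_on.Basis) blast

lemma compact_alexandrov_topology_finite_I_minus_cover:
  assumes "compact_space (alexandrov_topology M D g T)" and future: "\<And>q. q \<in> M \<Longrightarrow> \<exists>p. chron M D g T q p"
  obtains P where "finite P" "P \<subseteq> M" "M \<subseteq> \<Union> (I_minus M D g T ` P)"
proof -
  have cover: "M \<subseteq> \<Union> (I_minus M D g T ` M)"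
  proof
    fix q assume "q \<in> M"
    then obtain p where qp: "chron M D g T q p" using future by blast
    moreover have "p \<in> M" using chron_imp_mem[OF qp] by blast
    ultimately show "q \<in> \<Union> (I_minus M D g T ` M)" unfolding I_minus_def by blast
  qed
  have "compactin (alexandrov_topology M D g T) M"
    using assms(1) unfolding compact_space_def topspace_alexandrov_topology .
  then have "\<exists>F. finite F \<and> F \<subseteq> I_minus M D g T ` M \<and> M \<subseteq> \<Union> F"
    by (rule compactinD[OF _ _ cover]) (auto intro: openin_alexandrov_topology_I_minus)
  then obtain F where F: "finite F" "F \<subseteq> I_minus M D g T ` M" and "M \<subseteq> \<Union> F" by blast
  obtain P where "P \<subseteq> M" "finite P" and "F = I_minus M D g T ` P"
    using finite_subset_image[OF F] by blast
  then show ?thesis using that \<open>M \<subseteq> \<Union> F\<close> by blast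
qed

theorem theorem3p10:
  fixes M :: "'a::euclidean_space set" and D :: "'a \<Rightarrow> 'a set"
    and g :: "'a \<Rightarrow> 'a \<Rightarrow> 'a \<Rightarrow> real" and T :: "'a \<Rightarrow> 'a" and m k :: nat
  assumes "sub_space_time M m D k g T"
    and "compact_space (alexandrov_topology M D g T)"
  shows "\<exists>p\<in>M. chron M D g T p p"
proof -
  obtain P where "finite P" "P \<subseteq> M" and cover: "M \<subseteq> \<Union> (I_minus M D g T ` P)"
    using compact_alexandrov_topology_finite_I_minus_cover[OF assms(2) chron_future_exists[OF assms(1)]]
    by blast
  have "M \<noteq> {}" using assms(1) by (simp add: sub_space_time_def)
  then have "P \<noteq> {}" using cover by blast
  have serial: "\<exists>y\<in>P. chron M D g T x y" if "x \<in> P" for x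
  proof -
    have "x \<in> \<Union> (I_minus M D g T ` P)" using cover that \<open>P \<subseteq> M\<close> by blast
    then show ?thesis unfolding I_minus_def by blast
  qed
  have "\<exists>x\<in>P. chron M D g T x x"
    by (rule finite_serial_transitive_has_reflexive[where R = "chron M D g T",
          OF \<open>finite P\<close> \<open>P \<noteq> {}\<close> serial chron_trans])
  then show ?thesis using \<open>P \<subseteq> M\<close> by blast
qed

end
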